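(* Let $Q$ be a quandle, $G$ a group and $\rho:Q\to\mathrm{Core}(G)$ a quandle homomorphism. Then the map $\theta(\rho):Q\times Q\to G$, $\theta(\rho)_{x,y}=\rho(x)\rho(y)^{-1}$, is a quandle cocycle of $Q$ with values in $G$.
   Context: A quandle is a set $Q$ with a binary operation $*$ such that every left translation $L_x:y\mapsto x*y$ is bijective, $x*(y*z)=(x*y)*(x*z)$ and $x*x=x$. $\mathrm{Core}(G)$ is the quandle on $G$ with $x*y=xy^{-1}x$. A quandle cocycle with values in a group $G$ is a map $\theta:Q\times Q\to G$ with $\theta_{x*y,x*z}\theta_{x,z}=\theta_{x,y*z}\theta_{y,z}$ and $\theta_{x,x}=1$ for all $x,y,z\in Q$. *)

theory Defs
  imports "HOL-Algebra.Group"
begin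

definition quandle :: "'a set \<Rightarrow> ('a \<Rightarrow> 'a \<Rightarrow> 'a) \<Rightarrow> bool" where
  "quandle Q op \<longleftrightarrow>
     (\<forall>x\<in>Q. \<forall>y\<in>Q. op x y \<in> Q) \<and>
     (\<forall>x\<in>Q. bij_betw (op x) Q Q) \<and>
     (\<forall>x\<in>Q. \<forall>y\<in>Q. \<forall>z\<in>Q. op x (op y z) = op (op x y) (op x z)) \<and>
     (\<forall>x\<in>Q. op x x = x)"

definition core_op :: "('g, 'b) monoid_scheme \<Rightarrow> 'g \<Rightarrow> 'g \<Rightarrow> 'g" where
  "core_op G x y = x \<otimes>\<^bsub>G\<^esub> inv\<^bsub>G\<^esub> y \<otimes>\<^bsub>G\<^esub> x"

definition quandle_hom ::
  "'a set \<Rightarrow> ('a \<Rightarrow> 'a \<Rightarrow> 'a) \<Rightarrow> 'c set \<Rightarrow> ('c \<Rightarrow> 'c \<Rightarrow> 'c) \<Rightarrow> ('a \<Rightarrow> 'c) \<Rightarrow> bool" where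
  "quandle_hom Q op P op' f \<longleftrightarrow>
     (\<forall>x\<in>Q. f x \<in> P) \<and> (\<forall>x\<in>Q. \<forall>y\<in>Q. f (op x y) = op' (f x) (f y))"

definition quandle_cocycle ::
  "'a set \<Rightarrow> ('a \<Rightarrow> 'a \<Rightarrow> 'a) \<Rightarrow> ('g, 'b) monoid_scheme \<Rightarrow> ('a \<Rightarrow> 'a \<Rightarrow> 'g) \<Rightarrow> bool" where
  "quandle_cocycle Q op G \<theta> \<longleftrightarrow>
     (\<forall>x\<in>Q. \<forall>y\<in>Q. \<theta> x y \<in> carrier G) \<and>
     (\<forall>x\<in>Q. \<forall>y\<in>Q. \<forall>z\<in>Q.
        \<theta> (op x y) (op x z) \<otimes>\<^bsub>G\<^esub> \<theta> x z = \<theta> x (op y z) \<otimes>\<^bsub>G\<^esub> \<theta> y z) \<and>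
     (\<forall>x\<in>Q. \<theta> x x = \<one>\<^bsub>G\<^esub>)"

end

theory Submission
  imports Defs
begin

text \<open>Write \<open>a, b, c\<close> for the images of \<open>x, y, z\<close> in \<open>G\<close>. Since \<open>\<rho>\<close> turns \<open>*\<close> into
  \<open>u v\<^sup>-\<^sup>1 u\<close>, both sides of the cocycle identity collapse to \<open>a b\<^sup>-\<^sup>1\<close>:
  \<open>(a b\<^sup>-\<^sup>1 a)(a c\<^sup>-\<^sup>1 a)\<^sup>-\<^sup>1 (a c\<^sup>-\<^sup>1) = a b\<^sup>-\<^sup>1 = a (b c\<^sup>-\<^sup>1 b)\<^sup>-\<^sup>1 (b c\<^sup>-\<^sup>1)\<close>.\<close>

lemma (in group) inv_core_op:
  assumes "a \<in> carrier G" "c \<in> carrier G"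
  shows "inv (core_op G a c) = inv a \<otimes> c \<otimes> inv a"
  using assms by (simp add: core_op_def inv_mult_group m_assoc)

lemma (in group) core_op_mult_inv_core_op_mult:
  assumes a: "a \<in> carrier G" and b: "b \<in> carrier G" and c: "c \<in> carrier G"
  shows "core_op G a b \<otimes> inv (core_op G a c) \<otimes> (a \<otimes> inv c) = a \<otimes> inv b"
proof -
  have "core_op G a b \<otimes> inv (core_op G a c) \<otimes> (a \<otimes> inv c)
      = a \<otimes> inv b \<otimes> (a \<otimes> inv a) \<otimes> c \<otimes> (inv a \<otimes> a) \<otimes> inv c"
    using assms unfolding inv_core_op[OF a c]
    by (simp only: core_op_def m_assoc m_closed inv_closed)
  also have "\<dots> = a \<otimes> inv b"
    using assms by (simp add: r_inv l_inv m_assoc)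
  finally show ?thesis .
qed

lemma (in group) mult_inv_core_op_mult:
  assumes a: "a \<in> carrier G" and b: "b \<in> carrier G" and c: "c \<in> carrier G"
  shows "a \<otimes> inv (core_op G b c) \<otimes> (b \<otimes> inv c) = a \<otimes> inv b"
proof -
  have "a \<otimes> inv (core_op G b c) \<otimes> (b \<otimes> inv c) = a \<otimes> inv b \<otimes> c \<otimes> (inv b \<otimes> b) \<otimes> inv c"
    using assms unfolding inv_core_op[OF b c]
    by (simp only: m_assoc m_closed inv_closed)
  also have "\<dots> = a \<otimes> inv b"
    using assms by (simp add: r_inv l_inv m_assoc)
  finally show ?thesis .
qed

theorem lemma4p2:
  fixes Q :: "'a set" and op :: "'a \<Rightarrow> 'a \<Rightarrow> 'a"
    and G :: "('g, 'b) monoid_scheme" and \<rho> :: "'a \<Rightarrow> 'g"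
  assumes "quandle Q op"
    and "group G"
    and "quandle_hom Q op (carrier G) (core_op G) \<rho>"
  shows "quandle_cocycle Q op G (\<lambda>x y. \<rho> x \<otimes>\<^bsub>G\<^esub> inv\<^bsub>G\<^esub> (\<rho> y))"
proof -
  interpret group G by fact
  have \<rho>_closed: "\<And>x. x \<in> Q \<Longrightarrow> \<rho> x \<in> carrier G"
    and \<rho>_op: "\<And>x y. x \<in> Q \<Longrightarrow> y \<in> Q \<Longrightarrow> \<rho> (op x y) = core_op G (\<rho> x) (\<rho> y)"
    using assms(3) by (auto simp: quandle_hom_def)
  have "\<rho> (op x y) \<otimes>\<^bsub>G\<^esub> inv\<^bsub>G\<^esub> (\<rho> (op x z)) \<otimes>\<^bsub>G\<^esub> (\<rho> x \<otimes>\<^bsub>G\<^esub> inv\<^bsub>G\<^esub> (\<rho> z))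
      = \<rho> x \<otimes>\<^bsub>G\<^esub> inv\<^bsub>G\<^esub> (\<rho> (op y z)) \<otimes>\<^bsub>G\<^esub> (\<rho> y \<otimes>\<^bsub>G\<^esub> inv\<^bsub>G\<^esub> (\<rho> z))"
    if "x \<in> Q" "y \<in> Q" "z \<in> Q" for x y z
    using that by (simp add: \<rho>_op \<rho>_closed core_op_mult_inv_core_op_mult mult_inv_core_op_mult)
  then show ?thesis
    by (auto simp: quandle_cocycle_def \<rho>_closed)
qed

end
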